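(* Let $n=2m$, let $V$ be an $n$-dimensional complex vector space with orthonormal basis $e_1,\ldots,e_n$ for a nondegenerate symmetric bilinear form, $a_{ij}=e_i\wedge e_j\in\Lambda_2(V)$, $A=(a_{ij})_{1\le i,j\le n}\in\operatorname{Mat}_{n,n}(\Lambda(\Lambda_2(V)))$, and $$p=\sum_{\sigma\in S_{2m}}\operatorname{sgn}(\sigma)(A^2)_{\sigma(1)\sigma(2)}\cdots(A^2)_{\sigma(2m-3)\sigma(2m-2)}A_{\sigma(2m-1)\sigma(2m)}.$$ Then $\pi(g)p=\det(g)\,p$ for all $g\in O(V)$, where $\pi$ is the natural action of $O(V)$ on $\Lambda(\Lambda_2(V))$.
   Context: $\Lambda(\Lambda_2(V))$ is the exterior algebra on $\Lambda_2(V)$; its products are exterior products, and all products of entries are taken in the order written. $O(V)$ acts on $\Lambda_2(V)$ naturally and on $\Lambda(\Lambda_2(V))$ by the induced algebra automorphisms $\pi(g)$. *)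

theory Defs
  imports "Jordan_Normal_Form.Determinant" "HOL-Library.Product_Lexorder"
begin

text \<open>Concrete model of the exterior algebra \<Lambda>(\<Lambda>_2(V)), V = C^n with orthonormal
basis e_0,...,e_(n-1). A basis of \<Lambda>_2(V) is e_i\<and>e_j for pairs (i,j), i<j<n.
An element of \<Lambda>(\<Lambda>_2(V)) is a coefficient function on finite sets S of such pairs,
the coefficient of the monomial which is the product of the basis vectors in S
taken in increasing (lexicographic) order.\<close>

type_synonym ext = "(nat \<times> nat) set \<Rightarrow> complex"

definition pairs :: "nat \<Rightarrow> (nat \<times> nat) set" where
  "pairs n = {(i,j). i < j \<and> j < n}"

definition inv_count :: "(nat \<times> nat) set \<Rightarrow> (nat \<times> nat) set \<Rightarrow> nat" where
  "inv_count A B = card {(a,b). a \<in> A \<and> b \<in> B \<and> b < a}"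

definition ext_mult :: "ext \<Rightarrow> ext \<Rightarrow> ext" where
  "ext_mult x y = (\<lambda>S. if finite S then
      (\<Sum>A\<in>Pow S. (-1) ^ inv_count A (S - A) * x A * y (S - A)) else 0)"

definition ext_one :: ext where
  "ext_one = (\<lambda>S. if S = {} then 1 else 0)"

definition ext_scale :: "complex \<Rightarrow> ext \<Rightarrow> ext" where
  "ext_scale c x = (\<lambda>S. c * x S)"

definition ext_sum :: "('i \<Rightarrow> ext) \<Rightarrow> 'i set \<Rightarrow> ext" where
  "ext_sum f I = (\<lambda>S. \<Sum>i\<in>I. f i S)"

definition ext_prod_list :: "ext list \<Rightarrow> ext" where
  "ext_prod_list xs = foldr ext_mult xs ext_one"

text \<open>The element e_i \<and> e_j of \<Lambda>_2(V), viewed in degree one of \<Lambda>(\<Lambda>_2(V)).\<close>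
definition wedge2 :: "nat \<Rightarrow> nat \<Rightarrow> ext" where
  "wedge2 i j = (\<lambda>S. if i < j \<and> S = {(i,j)} then 1
                    else if j < i \<and> S = {(j,i)} then -1 else 0)"

definition A2 :: "nat \<Rightarrow> nat \<Rightarrow> nat \<Rightarrow> ext" where
  "A2 n i j = ext_sum (\<lambda>k. ext_mult (wedge2 i k) (wedge2 k j)) {..<n}"

text \<open>The polynomial p for n = 2m (indices shifted to start at 0).\<close>
definition pf :: "nat \<Rightarrow> ext" where
  "pf m = ext_sum (\<lambda>\<sigma>. ext_scale (of_int (sign \<sigma>))
      (ext_mult (ext_prod_list (map (\<lambda>k. A2 (2*m) (\<sigma> (2*k)) (\<sigma> (2*k+1))) [0..<m-1]))
                (wedge2 (\<sigma> (2*m-2)) (\<sigma> (2*m-1)))))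
     {\<sigma>. \<sigma> permutes {..<2*m}}"

definition img :: "nat \<Rightarrow> complex mat \<Rightarrow> nat \<times> nat \<Rightarrow> ext" where
  "img n g ij = ext_sum (\<lambda>(k,l). ext_scale (g $$ (k, fst ij) * g $$ (l, snd ij)) (wedge2 k l))
                  ({..<n} \<times> {..<n})"

definition mono :: "nat \<Rightarrow> complex mat \<Rightarrow> (nat \<times> nat) set \<Rightarrow> ext" where
  "mono n g S = ext_prod_list (map (img n g) (sorted_list_of_set S))"

definition ext_act :: "nat \<Rightarrow> complex mat \<Rightarrow> ext \<Rightarrow> ext" where
  "ext_act n g x = ext_sum (\<lambda>S. ext_scale (x S) (mono n g S)) (Pow (pairs n))"

end

theory Submission
  imports Defs
begin

text \<open>The action \<open>\<pi>(g)\<close> is an algebra homomorphism sending \<open>e_i \<and> e_j\<close> to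
  \<open>\<Sum>_{k,l} g_{ki} g_{lj} e_k \<and> e_l\<close>, so the entries of \<open>A\<close> transform as a 2-tensor. For
  orthogonal \<open>g\<close> the contraction \<open>\<Sum>_c g_{qc} g_{rc} = \<delta>_{qr}\<close> shows that the entries of \<open>A^2\<close>
  do too. Hence the product \<open>P_\<sigma>\<close> of entries attached to a permutation \<open>\<sigma>\<close> transforms as a
  tensor of rank \<open>n\<close>: \<open>\<pi>(g) P_\<sigma> = \<Sum>_j (\<Prod>_t g_{j(t) \<sigma>(t)}) P_j\<close>, the sum running over all
  maps \<open>j\<close> of the index set into itself. Summed against \<open>sign \<sigma>\<close>, the coefficient of \<open>P_j\<close>
  becomes the determinant of the matrix with rows \<open>j(0), \<dots>, j(n-1)\<close> of \<open>g\<close>: it is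
  \<open>sign j \<cdot> det g\<close> when \<open>j\<close> is a permutation and \<open>0\<close> otherwise, so \<open>\<pi>(g) p = det g \<cdot> p\<close>.\<close>

section \<open>The exterior algebra\<close>

definition ext_basis :: "(nat \<times> nat) set \<Rightarrow> ext" where
  "ext_basis S = (\<lambda>T. if T = S then 1 else 0)"

definition ext_finitary :: "ext \<Rightarrow> bool" where
  "ext_finitary x \<longleftrightarrow> (\<forall>S. infinite S \<longrightarrow> x S = 0)"

definition ext_deg1 :: "ext \<Rightarrow> bool" where
  "ext_deg1 x \<longleftrightarrow> (\<forall>S. card S \<noteq> 1 \<longrightarrow> x S = 0)"

definition ext_over :: "nat \<Rightarrow> ext \<Rightarrow> bool" where
  "ext_over n x \<longleftrightarrow> (\<forall>S. x S \<noteq> 0 \<longrightarrow> S \<subseteq> pairs n)"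

lemma finite_pairs: "finite (pairs n)"
  by (rule finite_subset[of _ "{..<n} \<times> {..<n}"]) (auto simp: pairs_def)

lemma ext_sum_apply: "ext_sum f I S = (\<Sum>i\<in>I. f i S)"
  by (simp add: ext_sum_def)

lemma ext_scale_apply: "ext_scale c x S = c * x S"
  by (simp add: ext_scale_def)

lemma ext_sum_cong: "(\<And>i. i \<in> I \<Longrightarrow> f i = h i) \<Longrightarrow> ext_sum f I = ext_sum h I"
  unfolding ext_sum_def by (intro ext sum.cong refl) auto

lemma ext_sum_swap: "ext_sum (\<lambda>i. ext_sum (\<lambda>j. f i j) J) I = ext_sum (\<lambda>j. ext_sum (\<lambda>i. f i j) I) J"
  unfolding ext_sum_def by (rule ext) (rule sum.swap)

lemma ext_sum_cartesian:
  "ext_sum (\<lambda>(p, s). f p s) (I \<times> J) = ext_sum (\<lambda>p. ext_sum (\<lambda>s. f p s) J) I"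
  unfolding ext_sum_def by (rule ext) (simp add: sum.cartesian_product case_prod_beta)

lemma ext_scale_sum: "ext_sum (\<lambda>i. ext_scale c (f i)) I = ext_scale c (ext_sum f I)"
  by (rule ext) (simp add: ext_sum_def ext_scale_def sum_distrib_left)

lemma ext_sum_scale_const: "ext_sum (\<lambda>i. ext_scale (f i) x) I = ext_scale (sum f I) x"
  by (rule ext) (simp add: ext_sum_def ext_scale_def sum_distrib_right)

lemma ext_scale_scale [simp]: "ext_scale a (ext_scale b x) = ext_scale (a * b) x"
  by (rule ext) (simp add: ext_scale_def)

lemma ext_scale_one [simp]: "ext_scale 1 x = x"
  by (rule ext) (simp add: ext_scale_def)

lemma ext_scale_zero [simp]: "ext_scale c (\<lambda>_. 0) = (\<lambda>_. 0)"
  by (rule ext) (simp add: ext_scale_def)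

lemma inv_count_empty [simp]: "inv_count {} S = 0" "inv_count S {} = 0"
  by (auto simp: inv_count_def)

lemma inv_count_singletons: "inv_count {p} {q} = (if q < p then 1 else 0)"
proof -
  have "{(a, b). a \<in> {p} \<and> b \<in> {q} \<and> b < a} = (if q < p then {(p, q)} else {})" by auto
  then show ?thesis by (simp add: inv_count_def)
qed

lemma inv_count_singleton_left:
  assumes "finite S"
  shows "inv_count {a} S = length (filter (\<lambda>b. b < a) (sorted_list_of_set S))"
proof -
  have "{(a', b). a' \<in> {a} \<and> b \<in> S \<and> b < a'} = (\<lambda>b. (a, b)) ` ({b. b < a} \<inter> S)" by auto
  then have "inv_count {a} S = card ({b. b < a} \<inter> S)"
    unfolding inv_count_def by (simp add: card_image inj_on_def)
  also have "\<dots> = length (filter (\<lambda>b. b < a) (sorted_list_of_set S))"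
    using assms by (simp add: distinct_length_filter)
  finally show ?thesis .
qed

lemma inv_count_Un_left:
  assumes "finite B" "finite C" "finite D" "B \<inter> C = {}"
  shows "inv_count (B \<union> C) D = inv_count B D + inv_count C D"
proof -
  have "{(a, b). a \<in> B \<union> C \<and> b \<in> D \<and> b < a}
      = {(a, b). a \<in> B \<and> b \<in> D \<and> b < a} \<union> {(a, b). a \<in> C \<and> b \<in> D \<and> b < a}" by auto
  moreover have "finite {(a, b). a \<in> B \<and> b \<in> D \<and> b < a}" "finite {(a, b). a \<in> C \<and> b \<in> D \<and> b < a}"
    by (rule finite_subset[of _ "B \<times> D"] finite_subset[of _ "C \<times> D"]; use assms in auto)+
  ultimately show ?thesis
    unfolding inv_count_def using assms(4) by (subst card_Un_disjoint[symmetric]) auto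
qed

lemma inv_count_Un_right:
  assumes "finite B" "finite C" "finite D" "C \<inter> D = {}"
  shows "inv_count B (C \<union> D) = inv_count B C + inv_count B D"
proof -
  have "{(a, b). a \<in> B \<and> b \<in> C \<union> D \<and> b < a}
      = {(a, b). a \<in> B \<and> b \<in> C \<and> b < a} \<union> {(a, b). a \<in> B \<and> b \<in> D \<and> b < a}" by auto
  moreover have "finite {(a, b). a \<in> B \<and> b \<in> C \<and> b < a}" "finite {(a, b). a \<in> B \<and> b \<in> D \<and> b < a}"
    by (rule finite_subset[of _ "B \<times> C"] finite_subset[of _ "B \<times> D"]; use assms in auto)+
  ultimately show ?thesis
    unfolding inv_count_def using assms(4) by (subst card_Un_disjoint[symmetric]) auto
qed

lemma inv_count_cocycle:
  assumes "finite S" "B \<subseteq> S" "C \<subseteq> S - B"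
  shows "inv_count (B \<union> C) (S - B - C) + inv_count B C = inv_count B (S - B) + inv_count C (S - B - C)"
proof -
  have fin: "finite B" "finite C" "finite (S - B - C)"
    using assms by (auto intro: finite_subset)
  have "S - B = C \<union> (S - B - C)" using assms(3) by auto
  then have "inv_count B (S - B) = inv_count B C + inv_count B (S - B - C)"
    using fin inv_count_Un_right[of B C "S - B - C"] by auto
  moreover have "inv_count (B \<union> C) (S - B - C) = inv_count B (S - B - C) + inv_count C (S - B - C)"
    using fin assms(3) by (intro inv_count_Un_left) auto
  ultimately show ?thesis by simp
qed

lemma sum_Pow_Pow_reindex:
  assumes "finite S"
  shows "(\<Sum>A\<in>Pow S. \<Sum>B\<in>Pow A. f A B) = (\<Sum>B\<in>Pow S. \<Sum>C\<in>Pow (S - B). f (B \<union> C) B)"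
proof -
  have fin: "\<And>A. A \<subseteq> S \<Longrightarrow> finite A" using assms finite_subset by blast
  have "(\<Sum>A\<in>Pow S. \<Sum>B\<in>Pow A. f A B) = (\<Sum>(A, B)\<in>Sigma (Pow S) Pow. f A B)"
    by (rule sum.Sigma) (use assms fin in auto)
  also have "\<dots> = (\<Sum>(B, C)\<in>Sigma (Pow S) (\<lambda>B. Pow (S - B)). f (B \<union> C) B)"
    by (rule sum.reindex_bij_witness[where j = "\<lambda>(A, B). (B, A - B)" and i = "\<lambda>(B, C). (B \<union> C, B)"])
       (auto simp: Un_absorb1 Diff_partition)
  also have "\<dots> = (\<Sum>B\<in>Pow S. \<Sum>C\<in>Pow (S - B). f (B \<union> C) B)"
    by (rule sum.Sigma[symmetric]) (use assms in auto)
  finally show ?thesis .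
qed

lemma ext_mult_assoc: "ext_mult (ext_mult x y) z = ext_mult x (ext_mult y z)"
proof (rule ext)
  fix S :: "(nat \<times> nat) set"
  show "ext_mult (ext_mult x y) z S = ext_mult x (ext_mult y z) S"
  proof (cases "finite S")
    case False
    then show ?thesis by (simp add: ext_mult_def)
  next
    case True
    have fin: "\<And>A. A \<subseteq> S \<Longrightarrow> finite A" using True finite_subset by blast
    let ?t = "\<lambda>B C. (-1) ^ (inv_count B (S - B) + inv_count C (S - B - C)) * x B * y C * z (S - B - C)"
    have "ext_mult (ext_mult x y) z S = (\<Sum>A\<in>Pow S. \<Sum>B\<in>Pow A.
        (-1) ^ (inv_count A (S - A) + inv_count B (A - B)) * x B * y (A - B) * z (S - A))"
      using True fin by (auto simp: ext_mult_def sum_distrib_left sum_distrib_right power_add mult_ac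
          intro!: sum.cong)
    also have "\<dots> = (\<Sum>B\<in>Pow S. \<Sum>C\<in>Pow (S - B). ?t B C)"
      unfolding sum_Pow_Pow_reindex[OF True]
    proof (intro sum.cong refl)
      fix B C assume "B \<in> Pow S" "C \<in> Pow (S - B)"
      then have "B \<union> C - B = C" "S - (B \<union> C) = S - B - C"
        and "inv_count (B \<union> C) (S - B - C) + inv_count B C = inv_count B (S - B) + inv_count C (S - B - C)"
        using inv_count_cocycle[OF True] by auto
      then show "(-1) ^ (inv_count (B \<union> C) (S - (B \<union> C)) + inv_count B (B \<union> C - B)) * x B
          * y (B \<union> C - B) * z (S - (B \<union> C)) = ?t B C" by simp
    qed
    also have "\<dots> = ext_mult x (ext_mult y z) S"
      using True fin by (auto simp: ext_mult_def sum_distrib_left sum_distrib_right power_add mult_ac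
          intro!: sum.cong)
    finally show ?thesis .
  qed
qed

lemma ext_mult_sum_left: "finite I \<Longrightarrow> ext_mult (ext_sum f I) y = ext_sum (\<lambda>i. ext_mult (f i) y) I"
  by (rule ext) (auto simp: ext_mult_def ext_sum_def sum_distrib_left sum_distrib_right intro: sum.swap)

lemma ext_mult_sum_right: "finite I \<Longrightarrow> ext_mult x (ext_sum f I) = ext_sum (\<lambda>i. ext_mult x (f i)) I"
  by (rule ext) (auto simp: ext_mult_def ext_sum_def sum_distrib_left sum_distrib_right intro: sum.swap)

lemma ext_mult_scale_left: "ext_mult (ext_scale c x) y = ext_scale c (ext_mult x y)"
  by (rule ext) (auto simp: ext_mult_def ext_scale_def sum_distrib_left mult_ac)

lemma ext_mult_scale_right: "ext_mult x (ext_scale c y) = ext_scale c (ext_mult x y)"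
  by (rule ext) (auto simp: ext_mult_def ext_scale_def sum_distrib_left mult_ac)

lemma ext_mult_zero_left [simp]: "ext_mult (\<lambda>_. 0) y = (\<lambda>_. 0)"
  by (rule ext) (simp add: ext_mult_def)

lemma ext_mult_zero_right [simp]: "ext_mult x (\<lambda>_. 0) = (\<lambda>_. 0)"
  by (rule ext) (simp add: ext_mult_def)

lemmas ext_mult_linear =
  ext_mult_sum_left ext_mult_sum_right ext_mult_scale_left ext_mult_scale_right ext_scale_scale

lemma ext_finitary_mult: "ext_finitary (ext_mult x y)"
  by (simp add: ext_finitary_def ext_mult_def)

lemma ext_finitary_one: "ext_finitary ext_one"
  by (auto simp: ext_finitary_def ext_one_def)

lemma ext_finitary_prod_list: "ext_finitary (ext_prod_list xs)"
  by (cases xs) (auto simp: ext_prod_list_def ext_finitary_one ext_finitary_mult)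

lemma ext_one_left: "ext_finitary y \<Longrightarrow> ext_mult ext_one y = y"
proof (rule ext)
  fix S assume y: "ext_finitary y"
  show "ext_mult ext_one y S = y S"
  proof (cases "finite S")
    case True
    have "ext_mult ext_one y S = (\<Sum>A\<in>Pow S. (-1) ^ inv_count A (S - A) * ext_one A * y (S - A))"
      using True by (simp add: ext_mult_def)
    also have "\<dots> = (\<Sum>A\<in>Pow S. if A = {} then y S else 0)"
      by (rule sum.cong[OF refl]) (auto simp: ext_one_def)
    finally show ?thesis using True by simp
  qed (use y in \<open>simp add: ext_mult_def ext_finitary_def\<close>)
qed

lemma ext_one_right: "ext_finitary x \<Longrightarrow> ext_mult x ext_one = x"
proof (rule ext)
  fix S assume x: "ext_finitary x"
  show "ext_mult x ext_one S = x S"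
  proof (cases "finite S")
    case True
    have "ext_mult x ext_one S = (\<Sum>A\<in>Pow S. (-1) ^ inv_count A (S - A) * x A * ext_one (S - A))"
      using True by (simp add: ext_mult_def)
    also have "\<dots> = (\<Sum>A\<in>Pow S. if A = S then x S else 0)"
      by (rule sum.cong[OF refl]) (auto simp: ext_one_def)
    finally show ?thesis using True by simp
  qed (use x in \<open>simp add: ext_mult_def ext_finitary_def\<close>)
qed

lemma ext_prod_list_Nil: "ext_prod_list [] = ext_one"
  by (simp add: ext_prod_list_def)

lemma ext_prod_list_Cons: "ext_prod_list (x # xs) = ext_mult x (ext_prod_list xs)"
  by (simp add: ext_prod_list_def)

lemma ext_prod_list_append:
  "ext_prod_list (xs @ ys) = ext_mult (ext_prod_list xs) (ext_prod_list ys)"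
  by (induction xs)
     (simp_all add: ext_prod_list_Nil ext_prod_list_Cons ext_one_left ext_finitary_prod_list ext_mult_assoc)


lemma ext_deg1_mult:
  assumes "ext_deg1 x" "ext_deg1 y" "finite S"
  shows "ext_mult x y S = (\<Sum>p\<in>S. (-1) ^ inv_count {p} (S - {p}) * x {p} * y (S - {p}))"
proof -
  have "ext_mult x y S = (\<Sum>A\<in>Pow S. (-1) ^ inv_count A (S - A) * x A * y (S - A))"
    using assms by (simp add: ext_mult_def)
  also have "\<dots> = (\<Sum>A\<in>(\<lambda>p. {p}) ` S. (-1) ^ inv_count A (S - A) * x A * y (S - A))"
  proof (rule sum.mono_neutral_right)
    show "\<forall>A\<in>Pow S - (\<lambda>p. {p}) ` S. (-1) ^ inv_count A (S - A) * x A * y (S - A) = 0"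
      using assms(1) by (auto simp: ext_deg1_def card_1_singleton_iff)
  qed (use assms in auto)
  also have "\<dots> = (\<Sum>p\<in>S. (-1) ^ inv_count {p} (S - {p}) * x {p} * y (S - {p}))"
    by (subst sum.reindex) (auto simp: inj_on_def)
  finally show ?thesis .
qed

lemma ext_deg1_anticomm:
  assumes x: "ext_deg1 x" and y: "ext_deg1 y"
  shows "ext_mult x y = ext_scale (-1) (ext_mult y x)"
proof (rule ext)
  fix S :: "(nat \<times> nat) set"
  show "ext_mult x y S = ext_scale (-1) (ext_mult y x) S"
  proof (cases "finite S")
    case False
    then show ?thesis by (simp add: ext_mult_def ext_scale_def)
  next
    case True
    note expand = ext_deg1_mult[OF x y True] ext_deg1_mult[OF y x True]
    show ?thesis
    proof (cases "card S = 2")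
      case False
      then have vanish: "\<And>z p. ext_deg1 z \<Longrightarrow> p \<in> S \<Longrightarrow> z (S - {p}) = 0"
        using True by (auto simp: ext_deg1_def)
      show ?thesis unfolding expand ext_scale_def using vanish[OF x] vanish[OF y] by simp
    next
      case True
      then obtain p q where S: "S = {p, q}" and "p \<noteq> q" by (auto simp: card_2_iff)
      then have "{p, q} - {p} = {q}" "{p, q} - {q} = {p}" "p < q \<or> q < p" by auto
      then show ?thesis unfolding ext_scale_def expand unfolding S
        using \<open>p \<noteq> q\<close> by (auto simp: inv_count_singletons algebra_simps)
    qed
  qed
qed

lemma ext_deg1_square: "ext_deg1 x \<Longrightarrow> ext_mult x x = (\<lambda>_. 0)"
  using ext_deg1_anticomm[of x x] by (auto simp: fun_eq_iff ext_scale_def)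

lemma ext_deg1_wedge2: "ext_deg1 (wedge2 i j)"
  by (auto simp: ext_deg1_def wedge2_def)

lemma ext_deg1_img: "ext_deg1 (img n g a)"
  by (auto simp: img_def ext_deg1_def ext_sum_def ext_scale_def wedge2_def case_prod_beta
      intro!: sum.neutral)

lemma ext_deg1_finitary: "ext_deg1 x \<Longrightarrow> ext_finitary x"
  by (auto simp: ext_deg1_def ext_finitary_def)

lemma ext_deg1_mult_sorted_prod:
  assumes v: "\<And>b. ext_deg1 (v b)" and sorted: "sorted_wrt (<) xs"
  shows "ext_mult (v a) (ext_prod_list (map v xs)) =
    (if a \<in> set xs then (\<lambda>_. 0)
     else ext_scale ((-1) ^ length (filter (\<lambda>b. b < a) xs)) (ext_prod_list (map v (insort a xs))))"
  using sorted
proof (induction xs)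
  case Nil
  then show ?case by (simp add: ext_prod_list_Cons ext_prod_list_Nil)
next
  case (Cons b xs)
  then have b_less: "\<forall>y\<in>set xs. b < y" and IH: "ext_mult (v a) (ext_prod_list (map v xs)) =
    (if a \<in> set xs then (\<lambda>_. 0)
     else ext_scale ((-1) ^ length (filter (\<lambda>b. b < a) xs)) (ext_prod_list (map v (insort a xs))))"
    by auto
  have lhs: "ext_mult (v a) (ext_prod_list (map v (b # xs)))
      = ext_mult (ext_mult (v a) (v b)) (ext_prod_list (map v xs))"
    by (simp add: ext_prod_list_Cons ext_mult_assoc)
  consider "a = b" | "a < b" | "b < a" by fastforce
  then show ?case
  proof cases
    case 1
    then show ?thesis unfolding lhs using ext_deg1_square[OF v] by simp
  next
    case 2
    then have "a \<notin> set (b # xs)" "filter (\<lambda>c. c < a) (b # xs) = []" "insort a (b # xs) = a # b # xs"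
      using b_less by (auto simp: filter_empty_conv less_imp_le)
    then show ?thesis by (simp add: ext_prod_list_Cons)
  next
    case 3
    have "ext_mult (v a) (ext_prod_list (map v (b # xs)))
        = ext_scale (-1) (ext_mult (v b) (ext_mult (v a) (ext_prod_list (map v xs))))"
      unfolding lhs ext_deg1_anticomm[OF v v, of a b] ext_mult_scale_left ext_mult_assoc ..
    then show ?thesis
      unfolding IH using 3 by (auto simp: ext_mult_scale_right ext_prod_list_Cons)
  qed
qed

lemma ext_basis_empty: "ext_basis {} = ext_one"
  by (rule ext) (simp add: ext_basis_def ext_one_def)

lemma ext_basis_mult_singleton:
  assumes "finite B"
  shows "ext_mult (ext_basis {a}) (ext_basis B) =
    (if a \<in> B then (\<lambda>_. 0) else ext_scale ((-1) ^ inv_count {a} B) (ext_basis (insert a B)))"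
proof (rule ext)
  fix T :: "(nat \<times> nat) set"
  show "ext_mult (ext_basis {a}) (ext_basis B) T =
    (if a \<in> B then (\<lambda>_. 0) else ext_scale ((-1) ^ inv_count {a} B) (ext_basis (insert a B))) T"
  proof (cases "finite T")
    case False
    then have "T \<noteq> insert a B" using assms by auto
    then show ?thesis using False by (simp add: ext_mult_def ext_basis_def ext_scale_def)
  next
    case True
    have "ext_mult (ext_basis {a}) (ext_basis B) T
        = (\<Sum>A\<in>Pow T. (-1) ^ inv_count A (T - A) * ext_basis {a} A * ext_basis B (T - A))"
      using True by (simp add: ext_mult_def)
    also have "\<dots> = (\<Sum>A\<in>Pow T. if A = {a} then (if T - {a} = B then (-1) ^ inv_count {a} B else 0) else 0)"
      by (rule sum.cong[OF refl]) (auto simp: ext_basis_def)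
    also have "\<dots> = (if a \<in> T \<and> T - {a} = B then (-1) ^ inv_count {a} B else 0)"
      using True by (simp add: sum.delta)
    finally show ?thesis by (auto simp: ext_scale_def ext_basis_def)
  qed
qed

lemma ext_basis_eq_prod_list:
  "sorted_wrt (<) xs \<Longrightarrow> ext_basis (set xs) = ext_prod_list (map (\<lambda>a. ext_basis {a}) xs)"
proof (induction xs)
  case Nil
  then show ?case by (simp add: ext_prod_list_Nil ext_basis_empty)
next
  case (Cons a xs)
  then have "a \<notin> set xs" and "\<forall>b\<in>set xs. a < b" by auto
  moreover from this have "{(a', b). a' \<in> {a} \<and> b \<in> set xs \<and> b < a'} = {}"
    using less_asym by blast
  then have "inv_count {a} (set xs) = 0"
    by (simp only: inv_count_def card.empty)
  moreover have "ext_prod_list (map (\<lambda>a. ext_basis {a}) xs) = ext_basis (set xs)"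
    using Cons by simp
  ultimately show ?case by (simp add: ext_prod_list_Cons ext_basis_mult_singleton)
qed

lemma ext_over_eq_sum_basis: "ext_over n x \<Longrightarrow> x = ext_sum (\<lambda>S. ext_scale (x S) (ext_basis S)) (Pow (pairs n))"
proof (rule ext)
  fix T assume x: "ext_over n x"
  have "ext_sum (\<lambda>S. ext_scale (x S) (ext_basis S)) (Pow (pairs n)) T
      = (\<Sum>S\<in>Pow (pairs n). if S = T then x T else 0)"
    unfolding ext_sum_def ext_scale_def by (rule sum.cong) (auto simp: ext_basis_def)
  also have "\<dots> = x T" using x finite_pairs by (auto simp: sum.delta' ext_over_def)
  finally show "x T = ext_sum (\<lambda>S. ext_scale (x S) (ext_basis S)) (Pow (pairs n)) T" by simp
qed

lemma ext_over_basis: "B \<subseteq> pairs n \<Longrightarrow> ext_over n (ext_basis B)"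
  by (auto simp: ext_over_def ext_basis_def)

lemma ext_over_one: "ext_over n ext_one"
  by (auto simp: ext_over_def ext_one_def)

lemma ext_over_mult:
  assumes x: "ext_over n x" and y: "ext_over n y"
  shows "ext_over n (ext_mult x y)"
proof (unfold ext_over_def, intro allI impI)
  fix S assume nz: "ext_mult x y S \<noteq> 0"
  then have "finite S" by (auto simp: ext_mult_def split: if_splits)
  with nz obtain A where "A \<subseteq> S" "x A \<noteq> 0" "y (S - A) \<noteq> 0"
    by (auto simp: ext_mult_def elim!: sum.not_neutral_contains_not_neutral)
  with x y show "S \<subseteq> pairs n" unfolding ext_over_def by blast
qed

lemma ext_over_sum: "(\<And>i. i \<in> I \<Longrightarrow> ext_over n (f i)) \<Longrightarrow> ext_over n (ext_sum f I)"
  unfolding ext_over_def ext_sum_def by (metis (no_types, lifting) sum.neutral)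

lemma ext_over_prod_list: "(\<And>x. x \<in> set xs \<Longrightarrow> ext_over n x) \<Longrightarrow> ext_over n (ext_prod_list xs)"
  by (induction xs) (auto simp: ext_prod_list_Nil ext_prod_list_Cons ext_over_one ext_over_mult)

lemma ext_over_wedge2: "i < n \<Longrightarrow> j < n \<Longrightarrow> ext_over n (wedge2 i j)"
  by (auto simp: ext_over_def wedge2_def pairs_def)

lemma ext_over_finitary: "ext_over n x \<Longrightarrow> ext_finitary x"
  unfolding ext_over_def ext_finitary_def using finite_pairs finite_subset by blast

section \<open>The action \<open>\<pi>(g)\<close> is an algebra homomorphism\<close>

lemma ext_act_sum: "finite I \<Longrightarrow> ext_act n g (ext_sum f I) = ext_sum (\<lambda>i. ext_act n g (f i)) I"
  by (rule ext) (auto simp: ext_act_def ext_sum_def ext_scale_def sum_distrib_right intro: sum.swap)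

lemma ext_act_scale: "ext_act n g (ext_scale c x) = ext_scale c (ext_act n g x)"
  by (rule ext) (auto simp: ext_act_def ext_sum_def ext_scale_def sum_distrib_left mult_ac)

lemma ext_act_zero: "ext_act n g (\<lambda>_. 0) = (\<lambda>_. 0)"
  by (rule ext) (auto simp: ext_act_def ext_sum_def ext_scale_def)

lemma ext_finitary_act: "ext_finitary (ext_act n g x)"
  using ext_finitary_prod_list
  by (auto simp: ext_finitary_def ext_act_def ext_sum_def ext_scale_def Defs.mono_def)

lemma ext_act_basis: "B \<subseteq> pairs n \<Longrightarrow> ext_act n g (ext_basis B) = Defs.mono n g B"
proof (rule ext)
  fix T assume B: "B \<subseteq> pairs n"
  have "ext_act n g (ext_basis B) T = (\<Sum>S\<in>Pow (pairs n). if S = B then Defs.mono n g B T else 0)"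
    unfolding ext_act_def ext_sum_def ext_scale_def by (rule sum.cong) (auto simp: ext_basis_def)
  then show "ext_act n g (ext_basis B) T = Defs.mono n g B T"
    using B finite_pairs by (simp add: sum.delta)
qed

lemma ext_act_one: "ext_act n g ext_one = ext_one"
  using ext_act_basis[of "{}" n g] by (simp add: ext_basis_empty Defs.mono_def ext_prod_list_Nil)

lemma ext_act_basis_singleton_mult_basis:
  assumes a: "a \<in> pairs n" and B: "B \<subseteq> pairs n"
  shows "ext_act n g (ext_mult (ext_basis {a}) (ext_basis B)) = ext_mult (img n g a) (Defs.mono n g B)"
proof -
  have "finite B" using B finite_pairs finite_subset by blast
  have sorted_insert: "ext_mult (img n g a) (Defs.mono n g B) =
    (if a \<in> set (sorted_list_of_set B) then (\<lambda>_. 0)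
     else ext_scale ((-1) ^ length (filter (\<lambda>b. b < a) (sorted_list_of_set B)))
            (ext_prod_list (map (img n g) (insort a (sorted_list_of_set B)))))"
    unfolding Defs.mono_def by (rule ext_deg1_mult_sorted_prod) (auto simp: ext_deg1_img)
  show ?thesis
  proof (cases "a \<in> B")
    case True
    then show ?thesis
      using \<open>finite B\<close> by (simp add: sorted_insert ext_basis_mult_singleton ext_act_zero)
  next
    case False
    then have "ext_act n g (ext_mult (ext_basis {a}) (ext_basis B))
        = ext_scale ((-1) ^ inv_count {a} B) (Defs.mono n g (insert a B))"
      using \<open>finite B\<close> a B by (simp add: ext_basis_mult_singleton ext_act_scale ext_act_basis)
    then show ?thesis
      unfolding sorted_insert using False \<open>finite B\<close>
      by (simp add: inv_count_singleton_left Defs.mono_def sorted_list_of_set_insert)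
  qed
qed

lemma ext_act_basis_singleton_mult:
  assumes a: "a \<in> pairs n" and y: "ext_over n y"
  shows "ext_act n g (ext_mult (ext_basis {a}) y) = ext_mult (img n g a) (ext_act n g y)"
proof -
  have fin: "finite (Pow (pairs n))" using finite_pairs by simp
  have "ext_act n g (ext_mult (ext_basis {a}) y)
      = ext_sum (\<lambda>S. ext_scale (y S) (ext_act n g (ext_mult (ext_basis {a}) (ext_basis S)))) (Pow (pairs n))"
    by (subst ext_over_eq_sum_basis[OF y])
       (simp only: ext_mult_sum_right[OF fin] ext_act_sum[OF fin] ext_mult_scale_right ext_act_scale)
  also have "\<dots> = ext_sum (\<lambda>S. ext_scale (y S) (ext_mult (img n g a) (Defs.mono n g S))) (Pow (pairs n))"
    using ext_act_basis_singleton_mult_basis[OF a] by (intro ext_sum_cong) auto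
  also have "\<dots> = ext_mult (img n g a) (ext_act n g y)"
    unfolding ext_act_def by (simp only: ext_mult_sum_right[OF fin] ext_mult_scale_right)
  finally show ?thesis .
qed

lemma ext_act_basis_mult:
  assumes S: "S \<subseteq> pairs n" and y: "ext_over n y"
  shows "ext_act n g (ext_mult (ext_basis S) y) = ext_mult (Defs.mono n g S) (ext_act n g y)"
proof -
  have "finite S" using S finite_pairs finite_subset by blast
  have "ext_act n g (ext_mult (ext_prod_list (map (\<lambda>a. ext_basis {a}) xs)) y)
      = ext_mult (ext_prod_list (map (img n g) xs)) (ext_act n g y)" if "set xs \<subseteq> pairs n" for xs
    using that
  proof (induction xs)
    case Nil
    then show ?case by (simp add: ext_prod_list_Nil ext_one_left ext_over_finitary[OF y] ext_finitary_act)
  next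
    case (Cons a xs)
    then have "ext_over n (ext_mult (ext_prod_list (map (\<lambda>a. ext_basis {a}) xs)) y)"
      using y by (auto intro!: ext_over_mult ext_over_prod_list ext_over_basis)
    then show ?case
      using Cons by (simp add: ext_prod_list_Cons ext_mult_assoc ext_act_basis_singleton_mult)
  qed
  from this[of "sorted_list_of_set S"] show ?thesis
    using S \<open>finite S\<close> ext_basis_eq_prod_list[of "sorted_list_of_set S"] by (simp add: Defs.mono_def)
qed

lemma ext_act_mult:
  assumes x: "ext_over n x" and y: "ext_over n y"
  shows "ext_act n g (ext_mult x y) = ext_mult (ext_act n g x) (ext_act n g y)"
proof -
  have fin: "finite (Pow (pairs n))" using finite_pairs by simp
  have "ext_act n g (ext_mult x y)
      = ext_sum (\<lambda>S. ext_scale (x S) (ext_act n g (ext_mult (ext_basis S) y))) (Pow (pairs n))"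
    by (subst ext_over_eq_sum_basis[OF x])
       (simp only: ext_mult_sum_left[OF fin] ext_act_sum[OF fin] ext_mult_scale_left ext_act_scale)
  also have "\<dots> = ext_sum (\<lambda>S. ext_scale (x S) (ext_mult (Defs.mono n g S) (ext_act n g y))) (Pow (pairs n))"
    using ext_act_basis_mult[OF _ y] by (intro ext_sum_cong) auto
  also have "\<dots> = ext_mult (ext_act n g x) (ext_act n g y)"
    unfolding ext_act_def by (simp only: ext_mult_sum_left[OF fin] ext_mult_scale_left)
  finally show ?thesis .
qed

section \<open>Covariance of the entries of \<open>A\<close> and \<open>A\<^sup>2\<close>\<close>

lemma img_expand:
  "img n g (i, j) = ext_sum (\<lambda>k. ext_sum (\<lambda>l. ext_scale (g $$ (k, i) * g $$ (l, j)) (wedge2 k l)) {..<n}) {..<n}"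
  unfolding img_def ext_sum_def by (rule ext) (simp add: sum.cartesian_product case_prod_beta)

lemma img_swap: "img n g (j, i) = ext_scale (-1) (img n g (i, j))"
proof -
  have "img n g (j, i) = ext_sum (\<lambda>k. ext_sum (\<lambda>l. ext_scale (g $$ (l, j) * g $$ (k, i)) (wedge2 l k)) {..<n}) {..<n}"
    unfolding img_expand by (rule ext_sum_swap)
  also have "\<dots> = ext_sum (\<lambda>k. ext_sum (\<lambda>l. ext_scale (-1) (ext_scale (g $$ (k, i) * g $$ (l, j)) (wedge2 k l))) {..<n}) {..<n}"
    by (intro ext_sum_cong ext) (auto simp: ext_scale_def wedge2_def)
  finally show ?thesis unfolding img_expand ext_scale_sum .
qed

lemma ext_act_wedge2:
  assumes "i < n" "j < n"
  shows "ext_act n g (wedge2 i j) = img n g (i, j)"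
proof -
  have act_single: "ext_act n g (ext_basis {(k, l)}) = img n g (k, l)" if "k < l" "l < n" for k l
    using that by (simp add: ext_act_basis pairs_def Defs.mono_def ext_prod_list_Cons ext_prod_list_Nil
        ext_one_right ext_deg1_finitary ext_deg1_img)
  consider "i < j" | "j < i" | "i = j" by fastforce
  then show ?thesis
  proof cases
    case 1
    then have "wedge2 i j = ext_basis {(i, j)}" by (auto simp: wedge2_def ext_basis_def)
    then show ?thesis using 1 assms act_single by simp
  next
    case 2
    then have "wedge2 i j = ext_scale (-1) (ext_basis {(j, i)})"
      by (auto simp: wedge2_def ext_basis_def ext_scale_def)
    then show ?thesis using 2 assms act_single img_swap[of n g j i] by (simp add: ext_act_scale)
  next
    case 3
    have "img n g (i, i) = (\<lambda>_. 0)"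
      using img_swap[of n g i i] by (auto simp: fun_eq_iff ext_scale_def)
    moreover have "wedge2 i j = (\<lambda>_. 0)" using 3 by (auto simp: wedge2_def)
    ultimately show ?thesis using 3 by (simp add: ext_act_zero)
  qed
qed

definition ext_covariant2 :: "nat \<Rightarrow> complex mat \<Rightarrow> (nat \<Rightarrow> nat \<Rightarrow> ext) \<Rightarrow> bool" where
  "ext_covariant2 n g F \<longleftrightarrow> (\<forall>a b. a < n \<longrightarrow> b < n \<longrightarrow>
     ext_act n g (F a b) = ext_sum (\<lambda>(p, q). ext_scale (g $$ (p, a) * g $$ (q, b)) (F p q)) ({..<n} \<times> {..<n})
     \<and> ext_over n (F a b))"

lemma ext_covariant2_wedge2: "ext_covariant2 n g wedge2"
  unfolding ext_covariant2_def using ext_act_wedge2 ext_over_wedge2 by (simp add: img_def)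

abbreviation orthogonal_rows :: "nat \<Rightarrow> complex mat \<Rightarrow> bool" where
  "orthogonal_rows n g \<equiv> \<forall>q<n. \<forall>r<n. (\<Sum>c<n. g $$ (q, c) * g $$ (r, c)) = of_bool (q = r)"

lemma orthogonal_rows_if_orthogonal:
  assumes g: "g \<in> carrier_mat n n" and orth: "transpose_mat g * g = 1\<^sub>m n"
  shows "orthogonal_rows n g"
proof (intro allI impI)
  fix q r assume "q < n" "r < n"
  have "g * transpose_mat g = 1\<^sub>m n"
    using mat_mult_left_right_inverse[OF _ g orth] g by simp
  moreover have "(g * transpose_mat g) $$ (q, r) = (\<Sum>c<n. g $$ (q, c) * g $$ (r, c))"
    using g \<open>q < n\<close> \<open>r < n\<close> by (simp add: scalar_prod_def atLeast0LessThan)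
  ultimately show "(\<Sum>c<n. g $$ (q, c) * g $$ (r, c)) = of_bool (q = r)"
    using \<open>q < n\<close> \<open>r < n\<close> by (cases "q = r") auto
qed

lemma ext_sum_orthogonal_contraction:
  assumes "orthogonal_rows n g"
  shows "ext_sum (\<lambda>c. ext_mult (ext_sum (\<lambda>q. ext_scale (g $$ (q, c)) (u q)) {..<n})
                                (ext_sum (\<lambda>r. ext_scale (g $$ (r, c)) (v r)) {..<n})) {..<n}
       = ext_sum (\<lambda>q. ext_mult (u q) (v q)) {..<n}"
proof -
  have "ext_sum (\<lambda>c. ext_mult (ext_sum (\<lambda>q. ext_scale (g $$ (q, c)) (u q)) {..<n})
                                (ext_sum (\<lambda>r. ext_scale (g $$ (r, c)) (v r)) {..<n})) {..<n}
      = ext_sum (\<lambda>r. ext_sum (\<lambda>q. ext_sum (\<lambda>c. ext_scale (g $$ (r, c) * g $$ (q, c))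
          (ext_mult (u q) (v r))) {..<n}) {..<n}) {..<n}"
    by (simp only: ext_mult_linear finite_lessThan ext_scale_sum[symmetric])
       (subst ext_sum_swap, rule ext_sum_cong, rule ext_sum_swap)
  also have "\<dots> = ext_sum (\<lambda>r. ext_sum (\<lambda>q. ext_scale (of_bool (r = q)) (ext_mult (u q) (v r))) {..<n}) {..<n}"
    using assms by (intro ext_sum_cong) (simp add: ext_sum_scale_const)
  also have "\<dots> = ext_sum (\<lambda>q. ext_mult (u q) (v q)) {..<n}"
  proof (intro ext_sum_cong ext)
    fix r S assume "r \<in> {..<n}"
    then have "{..<n} \<inter> {q. r = q} = {r}" by auto
    then show "ext_sum (\<lambda>q. ext_scale (of_bool (r = q)) (ext_mult (u q) (v r))) {..<n} S
        = ext_mult (u r) (v r) S"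
      by (simp add: ext_sum_apply ext_scale_apply)
  qed
  finally show ?thesis .
qed

lemma ext_covariant2_A2:
  assumes orth: "orthogonal_rows n g"
  shows "ext_covariant2 n g (A2 n)"
  unfolding ext_covariant2_def
proof (intro allI impI conjI)
  fix a b assume a: "a < n" and b: "b < n"
  show "ext_over n (A2 n a b)"
    unfolding A2_def by (auto intro!: ext_over_sum ext_over_mult ext_over_wedge2 a b)
  define u where "u q = ext_sum (\<lambda>p. ext_scale (g $$ (p, a)) (wedge2 p q)) {..<n}" for q
  define v where "v r = ext_sum (\<lambda>s. ext_scale (g $$ (s, b)) (wedge2 r s)) {..<n}" for r
  have img_left: "img n g (a, c) = ext_sum (\<lambda>q. ext_scale (g $$ (q, c)) (u q)) {..<n}" for c
    unfolding u_def ext_scale_sum[symmetric] img_expand by (subst ext_sum_swap) (simp add: mult_ac)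
  have img_right: "img n g (c, b) = ext_sum (\<lambda>r. ext_scale (g $$ (r, c)) (v r)) {..<n}" for c
    unfolding img_expand v_def ext_scale_sum[symmetric] by simp
  have "ext_act n g (A2 n a b) = ext_sum (\<lambda>c. ext_mult (img n g (a, c)) (img n g (c, b))) {..<n}"
    unfolding A2_def ext_act_sum[OF finite_lessThan] using a b
    by (intro ext_sum_cong) (simp add: ext_act_mult ext_over_wedge2 ext_act_wedge2)
  also have "\<dots> = ext_sum (\<lambda>q. ext_mult (u q) (v q)) {..<n}"
    unfolding img_left img_right by (rule ext_sum_orthogonal_contraction[OF orth])
  also have "\<dots> = ext_sum (\<lambda>q. ext_sum (\<lambda>s. ext_sum (\<lambda>p. ext_scale (g $$ (s, b) * g $$ (p, a))
      (ext_mult (wedge2 p q) (wedge2 q s))) {..<n}) {..<n}) {..<n}"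
    unfolding u_def v_def by (simp only: ext_mult_linear finite_lessThan ext_scale_sum[symmetric])
  also have "\<dots> = ext_sum (\<lambda>s. ext_sum (\<lambda>p. ext_sum (\<lambda>q. ext_scale (g $$ (s, b) * g $$ (p, a))
      (ext_mult (wedge2 p q) (wedge2 q s))) {..<n}) {..<n}) {..<n}"
    by (subst ext_sum_swap) (rule ext_sum_cong, rule ext_sum_swap)
  also have "\<dots> = ext_sum (\<lambda>p. ext_sum (\<lambda>s. ext_sum (\<lambda>q. ext_scale (g $$ (p, a) * g $$ (s, b))
      (ext_mult (wedge2 p q) (wedge2 q s))) {..<n}) {..<n}) {..<n}"
    by (subst ext_sum_swap) (simp add: mult.commute)
  also have "\<dots> = ext_sum (\<lambda>(p, s). ext_scale (g $$ (p, a) * g $$ (s, b)) (A2 n p s)) ({..<n} \<times> {..<n})"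
    unfolding ext_sum_cartesian A2_def ext_scale_sum ..
  finally show "ext_act n g (A2 n a b)
      = ext_sum (\<lambda>(p, q). ext_scale (g $$ (p, a) * g $$ (q, b)) (A2 n p q)) ({..<n} \<times> {..<n})" .
qed

section \<open>Products of covariant pairs\<close>

definition pair_prod :: "(nat \<Rightarrow> nat \<Rightarrow> nat \<Rightarrow> ext) \<Rightarrow> nat \<Rightarrow> (nat \<Rightarrow> nat) \<Rightarrow> ext" where
  "pair_prod F r i = ext_prod_list (map (\<lambda>k. F k (i (2*k)) (i (2*k+1))) [0..<r])"

lemma pair_prod_cong: "(\<And>t. t < 2*r \<Longrightarrow> i t = i' t) \<Longrightarrow> pair_prod F r i = pair_prod F r i'"
  unfolding pair_prod_def by (intro arg_cong[where f = ext_prod_list] map_cong refl) auto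

lemma pair_prod_Suc:
  "ext_finitary (F r (i (2*r)) (i (2*r+1))) \<Longrightarrow>
    pair_prod F (Suc r) i = ext_mult (pair_prod F r i) (F r (i (2*r)) (i (2*r+1)))"
  unfolding pair_prod_def by (simp add: ext_prod_list_append ext_prod_list_Cons ext_prod_list_Nil ext_one_right)

lemma ext_over_pair_prod:
  "(\<And>k. ext_covariant2 n g (F k)) \<Longrightarrow> (\<And>t. t < 2*r \<Longrightarrow> i t < n) \<Longrightarrow> ext_over n (pair_prod F r i)"
  unfolding pair_prod_def ext_covariant2_def by (auto intro!: ext_over_prod_list)

lemma sum_PiE_lessThan_Suc_Suc:
  "(\<Sum>j'\<in>PiE {..<Suc (Suc m)} (\<lambda>_. I). f j') =
   (\<Sum>j\<in>PiE {..<m} (\<lambda>_. I). \<Sum>p\<in>I. \<Sum>q\<in>I. f (j(m := p, Suc m := q)))"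
proof -
  have "(\<Sum>j\<in>PiE {..<m} (\<lambda>_. I). \<Sum>p\<in>I. \<Sum>q\<in>I. f (j(m := p, Suc m := q)))
      = (\<Sum>(j, p, q)\<in>PiE {..<m} (\<lambda>_. I) \<times> (I \<times> I). f (j(m := p, Suc m := q)))"
    by (simp add: sum.cartesian_product)
  also have "\<dots> = (\<Sum>j'\<in>PiE {..<Suc (Suc m)} (\<lambda>_. I). f j')"
  proof (rule sum.reindex_bij_witness[where j = "\<lambda>(j, p, q). j(m := p, Suc m := q)"
        and i = "\<lambda>j'. (restrict j' {..<m}, j' m, j' (Suc m))"])
    fix a assume "a \<in> PiE {..<m} (\<lambda>_. I) \<times> (I \<times> I)"
    then obtain j p q where a: "a = (j, p, q)" and j: "j \<in> PiE {..<m} (\<lambda>_. I)" and "p \<in> I" "q \<in> I"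
      by auto
    then show "(\<lambda>j'. (restrict j' {..<m}, j' m, j' (Suc m))) ((\<lambda>(j, p, q). j(m := p, Suc m := q)) a) = a"
      by (auto simp: restrict_def PiE_def extensional_def fun_eq_iff)
    show "(\<lambda>(j, p, q). j(m := p, Suc m := q)) a \<in> PiE {..<Suc (Suc m)} (\<lambda>_. I)"
      using a j \<open>p \<in> I\<close> \<open>q \<in> I\<close> by (auto simp: PiE_def extensional_def Pi_def less_Suc_eq)
  next
    fix b assume b: "b \<in> PiE {..<Suc (Suc m)} (\<lambda>_. I)"
    then show "(\<lambda>(j, p, q). j(m := p, Suc m := q)) ((\<lambda>j'. (restrict j' {..<m}, j' m, j' (Suc m))) b) = b"
      by (auto simp: restrict_def PiE_def extensional_def fun_eq_iff less_Suc_eq not_less)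
    show "(\<lambda>j'. (restrict j' {..<m}, j' m, j' (Suc m))) b \<in> PiE {..<m} (\<lambda>_. I) \<times> (I \<times> I)"
      using b by (auto simp: PiE_def Pi_def)
  qed auto
  finally show ?thesis by simp
qed

lemma ext_act_pair_prod:
  assumes cov: "\<And>k. ext_covariant2 n g (F k)" and i: "\<And>t. t < 2*r \<Longrightarrow> i t < n"
  shows "ext_act n g (pair_prod F r i)
    = ext_sum (\<lambda>j. ext_scale (\<Prod>t<2*r. g $$ (j t, i t)) (pair_prod F r j)) (PiE {..<2*r} (\<lambda>_. {..<n}))"
  using i
proof (induction r arbitrary: i)
  case 0
  show ?case by (simp add: pair_prod_def ext_prod_list_Nil ext_act_one ext_sum_def)
next
  case (Suc r)
  let ?J = "PiE {..<2*r} (\<lambda>_. {..<n})"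
  let ?c = "\<lambda>j. \<Prod>t<2*r. g $$ (j t, i t)"
  let ?d = "\<lambda>p q. g $$ (p, i (2*r)) * g $$ (q, i (2*r+1))"
  have IH: "ext_act n g (pair_prod F r i) = ext_sum (\<lambda>j. ext_scale (?c j) (pair_prod F r j)) ?J"
    using Suc.prems by (intro Suc.IH) auto
  have "i (2*r) < n" "i (2*r+1) < n" using Suc.prems by auto
  then have act_F: "ext_act n g (F r (i (2*r)) (i (2*r+1)))
      = ext_sum (\<lambda>p. ext_sum (\<lambda>q. ext_scale (?d p q) (F r p q)) {..<n}) {..<n}"
    and over_F: "ext_over n (F r (i (2*r)) (i (2*r+1)))"
    using cov[of r] by (auto simp: ext_covariant2_def ext_sum_cartesian)
  have fin_F: "ext_finitary (F r p q)" if "p < n" "q < n" for p q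
    using cov[of r] that by (auto simp: ext_covariant2_def intro: ext_over_finitary)
  have "ext_act n g (pair_prod F (Suc r) i)
      = ext_mult (ext_act n g (pair_prod F r i)) (ext_act n g (F r (i (2*r)) (i (2*r+1))))"
    using Suc.prems over_F ext_over_finitary[OF over_F]
    by (simp add: pair_prod_Suc ext_act_mult ext_over_pair_prod[OF cov])
  also have "\<dots> = ext_sum (\<lambda>j. ext_sum (\<lambda>p. ext_sum (\<lambda>q.
      ext_scale (?c j * ?d p q) (ext_mult (pair_prod F r j) (F r p q))) {..<n}) {..<n}) ?J"
    unfolding act_F IH
    by (simp only: ext_mult_sum_left[OF finite_PiE] finite_lessThan ext_mult_scale_left)
       (simp only: ext_mult_sum_right finite_lessThan ext_mult_scale_right ext_scale_scale
         ext_scale_sum[symmetric] mult.commute)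
  also have "\<dots> = ext_sum (\<lambda>j. ext_scale (\<Prod>t<2 * Suc r. g $$ (j t, i t)) (pair_prod F (Suc r) j))
      (PiE {..<2 * Suc r} (\<lambda>_. {..<n}))"
  proof (rule ext)
    fix S
    have "(\<Prod>t<Suc (Suc (2*r)). g $$ ((j(2*r := p, Suc (2*r) := q)) t, i t)) = ?c j * ?d p q"
      and "pair_prod F (Suc r) (j(2*r := p, Suc (2*r) := q)) = ext_mult (pair_prod F r j) (F r p q)"
      if "p < n" "q < n" for j p q
      using that fin_F[OF that] pair_prod_Suc[of F r "j(2*r := p, Suc (2*r) := q)"]
        pair_prod_cong[of r "j(2*r := p, Suc (2*r) := q)" j F] by (simp_all add: mult_ac)
    then show "ext_sum (\<lambda>j. ext_sum (\<lambda>p. ext_sum (\<lambda>q.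
        ext_scale (?c j * ?d p q) (ext_mult (pair_prod F r j) (F r p q))) {..<n}) {..<n}) ?J S
      = ext_sum (\<lambda>j. ext_scale (\<Prod>t<2 * Suc r. g $$ (j t, i t)) (pair_prod F (Suc r) j))
          (PiE {..<2 * Suc r} (\<lambda>_. {..<n})) S"
      unfolding ext_sum_apply ext_scale_apply mult_2 add_Suc_right add_Suc sum_PiE_lessThan_Suc_Suc
      by (simp add: mult_2[symmetric] mult.assoc)
  qed
  finally show ?case .
qed

section \<open>The determinant\<close>

lemma permutes_extend_PiE:
  fixes n :: nat
  assumes j: "j \<in> PiE {..<n} (\<lambda>_. {..<n})" and inj: "inj_on j {..<n}"
  shows "(\<lambda>t. if t < n then j t else t) permutes {..<n}"
proof (rule bij_imp_permutes)
  let ?s = "\<lambda>t. if t < n then j t else t"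
  have inj': "inj_on ?s {..<n}" using inj by (auto simp: inj_on_def)
  have "?s ` {..<n} \<subseteq> {..<n}" using j by (auto simp: PiE_def Pi_def)
  from endo_inj_surj[OF finite_lessThan[of n] this inj'] have "?s ` {..<n} = {..<n}" .
  then show "bij_betw ?s {..<n} {..<n}" using inj' by (simp add: bij_betw_def)
qed simp

lemma sum_PiE_inj_eq_sum_permutes:
  fixes n :: nat
  shows "(\<Sum>j\<in>PiE {..<n} (\<lambda>_. {..<n}) \<inter> {j. inj_on j {..<n}}. f j)
    = (\<Sum>\<sigma>\<in>{\<sigma>. \<sigma> permutes {..<n}}. f (restrict \<sigma> {..<n}))"
proof (rule sum.reindex_bij_witness[where i = "\<lambda>\<sigma>. restrict \<sigma> {..<n}" and j = "\<lambda>j t. if t < n then j t else t"])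
  fix \<sigma> assume "\<sigma> \<in> {\<sigma>. \<sigma> permutes {..<n}}"
  then have p: "\<sigma> permutes {..<n}" by simp
  show "(\<lambda>t. if t < n then restrict \<sigma> {..<n} t else t) = \<sigma>"
    using permutes_not_in[OF p] by (auto simp: fun_eq_iff)
  show "restrict \<sigma> {..<n} \<in> PiE {..<n} (\<lambda>_. {..<n}) \<inter> {j. inj_on j {..<n}}"
    using permutes_in_image[OF p] permutes_inj_on[OF p, of "{..<n}"] by (auto simp: inj_on_def)
next
  fix j assume j: "j \<in> PiE {..<n} (\<lambda>_. {..<n}) \<inter> {j. inj_on j {..<n}}"
  then show "(\<lambda>t. if t < n then j t else t) \<in> {\<sigma>. \<sigma> permutes {..<n}}"
    by (auto intro: permutes_extend_PiE)
  from j show restrict: "restrict (\<lambda>t. if t < n then j t else t) {..<n} = j"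
    by (auto simp: restrict_def PiE_def extensional_def fun_eq_iff)
  from restrict show "f (restrict (\<lambda>t. if t < n then j t else t) {..<n}) = f j" by simp
qed

lemma det_select_rows_leibniz:
  "det (mat n n (\<lambda>(t, s). g $$ (j t, s)))
    = (\<Sum>\<sigma>\<in>{\<sigma>. \<sigma> permutes {..<n}}. of_int (sign \<sigma>) * (\<Prod>t<n. g $$ (j t, \<sigma> t)))"
proof -
  have "det (mat n n (\<lambda>(t, s). g $$ (j t, s)))
      = (\<Sum>\<sigma>\<in>{\<sigma>. \<sigma> permutes {..<n}}. of_int (sign \<sigma>) * (\<Prod>t<n. mat n n (\<lambda>(t, s). g $$ (j t, s)) $$ (t, \<sigma> t)))"
    by (subst det_def'[of _ n]) (simp_all add: atLeast0LessThan)
  also have "\<dots> = (\<Sum>\<sigma>\<in>{\<sigma>. \<sigma> permutes {..<n}}. of_int (sign \<sigma>) * (\<Prod>t<n. g $$ (j t, \<sigma> t)))"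
  proof (rule sum.cong[OF refl])
    fix \<sigma> assume "\<sigma> \<in> {\<sigma>. \<sigma> permutes {..<n}}"
    then have "\<And>t. t < n \<Longrightarrow> \<sigma> t < n" using permutes_in_image by fastforce
    then show "of_int (sign \<sigma>) * (\<Prod>t<n. mat n n (\<lambda>(t, s). g $$ (j t, s)) $$ (t, \<sigma> t))
        = of_int (sign \<sigma>) * (\<Prod>t<n. g $$ (j t, \<sigma> t))" by simp
  qed
  finally show ?thesis .
qed

lemma det_select_rows:
  assumes g: "g \<in> carrier_mat n n" and j: "j \<in> PiE {..<n} (\<lambda>_. {..<n})"
  shows "det (mat n n (\<lambda>(t, s). g $$ (j t, s)))
       = (if inj_on j {..<n} then of_int (sign (\<lambda>t. if t < n then j t else t)) * det g else 0)"
proof (cases "inj_on j {..<n}")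
  case True
  let ?s = "\<lambda>t. if t < n then j t else t"
  have "?s permutes {0..<n}" using permutes_extend_PiE[OF j True] by (simp add: atLeast0LessThan)
  moreover have "mat n n (\<lambda>(t, s). g $$ (j t, s)) = mat n n (\<lambda>(t, s). g $$ (?s t, s))"
    by (rule eq_matI) auto
  ultimately show ?thesis using det_permute_rows[OF g] True by simp
next
  case False
  then obtain t1 t2 where t: "t1 < n" "t2 < n" "t1 \<noteq> t2" "j t1 = j t2" by (auto simp: inj_on_def)
  then have "row (mat n n (\<lambda>(t, s). g $$ (j t, s))) t1 = row (mat n n (\<lambda>(t, s). g $$ (j t, s))) t2"
    by (intro eq_vecI) auto
  then show ?thesis using det_identical_rows[OF mat_carrier t(3) t(1) t(2)] False by simp
qed

lemma ext_act_alternating_pair_prod: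
  assumes cov: "\<And>k. ext_covariant2 n g (F k)" and g: "g \<in> carrier_mat n n" and n: "n = 2*r"
  shows "ext_act n g (ext_sum (\<lambda>\<sigma>. ext_scale (of_int (sign \<sigma>)) (pair_prod F r \<sigma>)) {\<sigma>. \<sigma> permutes {..<n}})
       = ext_scale (det g) (ext_sum (\<lambda>\<sigma>. ext_scale (of_int (sign \<sigma>)) (pair_prod F r \<sigma>)) {\<sigma>. \<sigma> permutes {..<n}})"
proof (rule ext)
  fix S
  let ?Perm = "{\<sigma>. \<sigma> permutes {..<n}}"
  let ?J = "PiE {..<n} (\<lambda>_. {..<n})"
  let ?D = "\<lambda>j. det (mat n n (\<lambda>(t, s). g $$ (j t, s)))"
  have "ext_act n g (pair_prod F r \<sigma>) = ext_sum (\<lambda>j. ext_scale (\<Prod>t<n. g $$ (j t, \<sigma> t)) (pair_prod F r j)) ?J"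
    if "\<sigma> \<in> ?Perm" for \<sigma>
    using ext_act_pair_prod[OF cov, of r \<sigma>] permutes_in_image[of \<sigma> "{..<n}"] that n by auto
  then have "ext_act n g (ext_sum (\<lambda>\<sigma>. ext_scale (of_int (sign \<sigma>)) (pair_prod F r \<sigma>)) ?Perm) S
      = (\<Sum>\<sigma>\<in>?Perm. of_int (sign \<sigma>) * (\<Sum>j\<in>?J. (\<Prod>t<n. g $$ (j t, \<sigma> t)) * pair_prod F r j S))"
    by (simp add: ext_act_sum finite_permutations ext_act_scale ext_sum_apply ext_scale_apply)
  also have "\<dots> = (\<Sum>j\<in>?J. ?D j * pair_prod F r j S)"
    by (simp add: det_select_rows_leibniz sum_distrib_left sum_distrib_right mult_ac sum.swap[of _ ?J])
  also have "\<dots> = (\<Sum>j\<in>?J \<inter> {j. inj_on j {..<n}}. ?D j * pair_prod F r j S)"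
    by (rule sum.mono_neutral_right) (auto simp: finite_PiE det_select_rows[OF g])
  also have "\<dots> = (\<Sum>\<sigma>\<in>?Perm. det g * (of_int (sign \<sigma>) * pair_prod F r \<sigma> S))"
    unfolding sum_PiE_inj_eq_sum_permutes
  proof (rule sum.cong[OF refl])
    fix \<sigma> assume "\<sigma> \<in> ?Perm"
    then have p: "\<sigma> permutes {..<n}" by simp
    have extend: "(\<lambda>t. if t < n then restrict \<sigma> {..<n} t else t) = \<sigma>"
      using permutes_not_in[OF p] by (auto simp: fun_eq_iff)
    have J: "restrict \<sigma> {..<n} \<in> ?J" and inj: "inj_on (restrict \<sigma> {..<n}) {..<n}"
      using permutes_in_image[OF p] permutes_inj_on[OF p, of "{..<n}"] by (auto simp: inj_on_def)
    have "?D (restrict \<sigma> {..<n}) = of_int (sign \<sigma>) * det g"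
      using det_select_rows[OF g J] by (simp only: inj extend if_True)
    moreover have "pair_prod F r (restrict \<sigma> {..<n}) = pair_prod F r \<sigma>"
      using n by (intro pair_prod_cong) simp
    ultimately show "?D (restrict \<sigma> {..<n}) * pair_prod F r (restrict \<sigma> {..<n}) S
        = det g * (of_int (sign \<sigma>) * pair_prod F r \<sigma> S)"
      by simp
  qed
  also have "\<dots> = ext_scale (det g) (ext_sum (\<lambda>\<sigma>. ext_scale (of_int (sign \<sigma>)) (pair_prod F r \<sigma>)) ?Perm) S"
    by (simp add: ext_scale_apply ext_sum_apply sum_distrib_left)
  finally show "ext_act n g (ext_sum (\<lambda>\<sigma>. ext_scale (of_int (sign \<sigma>)) (pair_prod F r \<sigma>)) ?Perm) S
      = ext_scale (det g) (ext_sum (\<lambda>\<sigma>. ext_scale (of_int (sign \<sigma>)) (pair_prod F r \<sigma>)) ?Perm) S" .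
qed

lemma pf_eq_alternating_pair_prod:
  assumes "m \<ge> 1"
  shows "pf m = ext_sum (\<lambda>\<sigma>. ext_scale (of_int (sign \<sigma>))
      (pair_prod (\<lambda>k. if k < m - 1 then A2 (2*m) else wedge2) m \<sigma>)) {\<sigma>. \<sigma> permutes {..<2*m}}"
proof -
  let ?F = "\<lambda>k. if k < m - 1 then A2 (2*m) else wedge2"
  have "2*(m-1) = 2*m-2" "2*(m-1)+1 = 2*m-1" "m = Suc (m - 1)" using assms by auto
  then have "pair_prod ?F m \<sigma>
      = ext_mult (pair_prod ?F (m - 1) \<sigma>) (wedge2 (\<sigma> (2*m-2)) (\<sigma> (2*m-1)))" for \<sigma>
    using pair_prod_Suc[of ?F "m - 1" \<sigma>] by (simp add: ext_deg1_finitary ext_deg1_wedge2)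
  moreover have "pair_prod ?F (m - 1) \<sigma> = ext_prod_list (map (\<lambda>k. A2 (2*m) (\<sigma> (2*k)) (\<sigma> (2*k+1))) [0..<m-1])"
    for \<sigma> unfolding pair_prod_def by (intro arg_cong[where f = ext_prod_list] map_cong) auto
  ultimately show ?thesis unfolding pf_def by simp
qed

theorem lemma4p10:
  fixes m :: nat and g :: "complex mat"
  assumes "m \<ge> 1"
    and "g \<in> carrier_mat (2*m) (2*m)"
    and "transpose_mat g * g = 1\<^sub>m (2*m)"
  shows "ext_act (2*m) g (pf m) = ext_scale (det g) (pf m)"
proof -
  have "orthogonal_rows (2*m) g"
    using assms(2,3) by (rule orthogonal_rows_if_orthogonal)
  then have "ext_covariant2 (2*m) g (if k < m - 1 then A2 (2*m) else wedge2)" for k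
    by (simp add: ext_covariant2_A2 ext_covariant2_wedge2)
  then show ?thesis
    unfolding pf_eq_alternating_pair_prod[OF assms(1)]
    by (rule ext_act_alternating_pair_prod[OF _ assms(2) refl])
qed

end
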